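(* Let $(S,K,I)$ be a split graph. If $A_4(S)$ is connected, then $\Phi(S)$ is connected.
   Context: All graphs are finite and simple. A split graph is a graph $S$ whose vertex set is a disjoint union $V(S)=K\,\dot\cup\,I$ with $K$ a clique and $I$ an independent set; $(K,I)$ is called a bipartition of $S$, and $(S,K,I)$ denotes $S$ together with this fixed bipartition. A 2-switch in a graph $G$ is performed on four distinct vertices $a,b,c,d$ with $ab,cd\in E(G)$ and $ac,bd\notin E(G)$: it deletes $ab,cd$ and adds $ac,bd$; $a,b,c,d$ are said to participate in it. $A_4(G)$ is the graph with vertex set $V(G)$ in which distinct $u,v$ are adjacent iff some 2-switch on $G$ has both $u$ and $v$ among its participating vertices. For a split graph $(S,K,I)$ and distinct $u,v\in I$, $\sigma_{uv}(S)$ is the number of induced subgraphs of $S$ isomorphic to $P_4$ containing both $u$ and $v$. The factor graph $\Phi(S)$ is the loopless multigraph with vertex set $I$ having exactly $\sigma_{uv}(S)$ parallel edges between $u$ and $v$. Graph notions (connected, complete, clique, etc.) applied to $\Phi(S)$ refer to its underlying simple graph, in which $u\sim v$ iff $\sigma_{uv}(S)\ge1$. *)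

theory Defs
  imports Main
begin

definition simple_graph :: "'a set \<Rightarrow> ('a \<Rightarrow> 'a \<Rightarrow> bool) \<Rightarrow> bool" where
  "simple_graph V adj \<longleftrightarrow> finite V \<and>
     (\<forall>x y. adj x y \<longrightarrow> x \<in> V \<and> y \<in> V) \<and>
     (\<forall>x y. adj x y \<longrightarrow> adj y x) \<and> (\<forall>x. \<not> adj x x)"

definition split_graph :: "'a set \<Rightarrow> ('a \<Rightarrow> 'a \<Rightarrow> bool) \<Rightarrow> 'a set \<Rightarrow> 'a set \<Rightarrow> bool" where
  "split_graph V adj K I \<longleftrightarrow> simple_graph V adj \<and> V = K \<union> I \<and> K \<inter> I = {} \<and>
     (\<forall>x\<in>K. \<forall>y\<in>K. x \<noteq> y \<longrightarrow> adj x y) \<and>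
     (\<forall>x\<in>I. \<forall>y\<in>I. \<not> adj x y)"

definition two_switch :: "'a set \<Rightarrow> ('a \<Rightarrow> 'a \<Rightarrow> bool) \<Rightarrow> 'a \<Rightarrow> 'a \<Rightarrow> 'a \<Rightarrow> 'a \<Rightarrow> bool" where
  "two_switch V adj a b c d \<longleftrightarrow> a \<in> V \<and> b \<in> V \<and> c \<in> V \<and> d \<in> V \<and>
     distinct [a, b, c, d] \<and> adj a b \<and> adj c d \<and> \<not> adj a c \<and> \<not> adj b d"

definition A4_adj :: "'a set \<Rightarrow> ('a \<Rightarrow> 'a \<Rightarrow> bool) \<Rightarrow> 'a \<Rightarrow> 'a \<Rightarrow> bool" where
  "A4_adj V adj u v \<longleftrightarrow> u \<noteq> v \<and>
     (\<exists>a b c d. two_switch V adj a b c d \<and> u \<in> {a, b, c, d} \<and> v \<in> {a, b, c, d})"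

definition induced_P4 :: "'a set \<Rightarrow> ('a \<Rightarrow> 'a \<Rightarrow> bool) \<Rightarrow> 'a set \<Rightarrow> bool" where
  "induced_P4 V adj X \<longleftrightarrow> X \<subseteq> V \<and>
     (\<exists>w1 w2 w3 w4. distinct [w1, w2, w3, w4] \<and> X = {w1, w2, w3, w4} \<and>
        adj w1 w2 \<and> adj w2 w3 \<and> adj w3 w4 \<and>
        \<not> adj w1 w3 \<and> \<not> adj w1 w4 \<and> \<not> adj w2 w4)"

definition sigma :: "'a set \<Rightarrow> ('a \<Rightarrow> 'a \<Rightarrow> bool) \<Rightarrow> 'a \<Rightarrow> 'a \<Rightarrow> nat" where
  "sigma V adj u v = card {X. induced_P4 V adj X \<and> u \<in> X \<and> v \<in> X}"

text \<open>Underlying simple graph of the factor graph Phi(S) on vertex set I.\<close>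
definition Phi_adj :: "'a set \<Rightarrow> ('a \<Rightarrow> 'a \<Rightarrow> bool) \<Rightarrow> 'a set \<Rightarrow> 'a \<Rightarrow> 'a \<Rightarrow> bool" where
  "Phi_adj V adj I u v \<longleftrightarrow> u \<in> I \<and> v \<in> I \<and> u \<noteq> v \<and> sigma V adj u v \<ge> 1"

text \<open>Connectedness of the graph with vertex set W and adjacency R
 (every two vertices joined by a walk; the empty graph counts as connected).\<close>
definition connected_graph :: "'a set \<Rightarrow> ('a \<Rightarrow> 'a \<Rightarrow> bool) \<Rightarrow> bool" where
  "connected_graph W R \<longleftrightarrow>
     (\<forall>u\<in>W. \<forall>v\<in>W. (u, v) \<in> {(x, y). x \<in> W \<and> y \<in> W \<and> R x y}\<^sup>*)"

end

theory Submission
  imports Defs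
begin

text \<open>Every 2-switch of a split graph \<open>(S, K, I)\<close> consists of two vertices \<open>a, b \<in> I\<close>
  with incomparable neighbourhoods together with one vertex of \<open>K\<close> in each of the
  differences \<open>N(a) - N(b)\<close> and \<open>N(b) - N(a)\<close>; these four vertices induce a \<open>P\<^sub>4\<close>, so \<open>a\<close> and
  \<open>b\<close> are adjacent in \<open>\<Phi>(S)\<close>. Hence every edge of \<open>A\<^sub>4(S)\<close> lies in the span
  \<open>{a, b} \<union> (N(a) \<triangle> N(b))\<close> of such a pair. If the spans of two incomparable pairs
  \<open>{a, b}\<close> and \<open>{c, d}\<close> meet, then \<open>a\<close> and \<open>c\<close> lie in the same component of \<open>\<Phi>(S)\<close>: either
  they share a vertex, or a common vertex \<open>x \<in> N(a) \<inter> N(c)\<close> outside \<open>N(b) \<union> N(d)\<close> forces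
  one of the pairs \<open>{a, d}\<close>, \<open>{b, c}\<close>, \<open>{a, c}\<close> to be incomparable as well. Following a
  path of \<open>A\<^sub>4(S)\<close> between two vertices of \<open>I\<close> therefore never leaves a component
  of \<open>\<Phi>(S)\<close>.\<close>

definition incomparable :: "('a \<Rightarrow> 'a \<Rightarrow> bool) \<Rightarrow> 'a \<Rightarrow> 'a \<Rightarrow> bool" where
  "incomparable adj a b \<longleftrightarrow> (\<exists>k. adj a k \<and> \<not> adj b k) \<and> (\<exists>k. adj b k \<and> \<not> adj a k)"

definition span :: "('a \<Rightarrow> 'a \<Rightarrow> bool) \<Rightarrow> 'a \<Rightarrow> 'a \<Rightarrow> 'a set" where
  "span adj a b = {a, b} \<union> {x. adj a x \<noteq> adj b x}"

definition edges :: "'a set \<Rightarrow> ('a \<Rightarrow> 'a \<Rightarrow> bool) \<Rightarrow> ('a \<times> 'a) set" where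
  "edges W R = {(x, y). x \<in> W \<and> y \<in> W \<and> R x y}"

lemma connected_graph_iff_edges:
  "connected_graph W R \<longleftrightarrow> (\<forall>u\<in>W. \<forall>v\<in>W. (u, v) \<in> (edges W R)\<^sup>*)"
  unfolding connected_graph_def edges_def ..

lemma incomparable_commute: "incomparable adj a b \<longleftrightarrow> incomparable adj b a"
  unfolding incomparable_def by blast

lemma span_commute: "span adj a b = span adj b a"
  unfolding span_def by blast

lemma split_graph_I_subset: "split_graph V adj K I \<Longrightarrow> I \<subseteq> V"
  unfolding split_graph_def by blast

lemma split_graph_adj_sym: "split_graph V adj K I \<Longrightarrow> adj x y \<Longrightarrow> adj y x"
  unfolding split_graph_def simple_graph_def by blast

lemma split_graph_neighbour_of_I:
  "split_graph V adj K I \<Longrightarrow> x \<in> I \<Longrightarrow> adj x y \<Longrightarrow> y \<in> K \<and> y \<notin> I"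
  unfolding split_graph_def simple_graph_def by blast

lemma split_graph_non_neighbours_in_K:
  "split_graph V adj K I \<Longrightarrow> x \<in> K \<Longrightarrow> y \<in> K \<Longrightarrow> \<not> adj x y \<Longrightarrow> x = y"
  unfolding split_graph_def by blast

lemma I_vertex_in_span_is_endpoint:
  assumes "split_graph V adj K I" "a \<in> I" "b \<in> I" "x \<in> I" "x \<in> span adj a b"
  shows "x = a \<or> x = b"
  using assms split_graph_neighbour_of_I[OF assms(1)] unfolding span_def by blast

lemma sigma_commute: "sigma V adj u v = sigma V adj v u"
  unfolding sigma_def by (simp add: conj_commute)

lemma Phi_adj_sym: "Phi_adj V adj I u v \<Longrightarrow> Phi_adj V adj I v u"
  unfolding Phi_adj_def by (auto simp: sigma_commute)

lemma sigma_pos_if_induced_P4: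
  assumes "finite V" "induced_P4 V adj X" "u \<in> X" "v \<in> X"
  shows "sigma V adj u v \<ge> 1"
proof -
  let ?P4s = "{X. induced_P4 V adj X \<and> u \<in> X \<and> v \<in> X}"
  have "?P4s \<subseteq> Pow V"
    unfolding induced_P4_def by blast
  then have "finite ?P4s"
    using \<open>finite V\<close> finite_subset by blast
  moreover have "X \<in> ?P4s"
    using assms by blast
  ultimately show ?thesis
    unfolding sigma_def by (metis One_nat_def Suc_leI card_gt_0_iff empty_iff)
qed

lemma induced_P4_of_incomparable:
  assumes S: "split_graph V adj K I" and "a \<in> I" "b \<in> I"
    and k: "adj a k" "\<not> adj b k" and k': "adj b k'" "\<not> adj a k'"
  shows "induced_P4 V adj {a, k, k', b}"
proof -
  have K: "k \<in> K" "k' \<in> K" "k \<notin> I" "k' \<notin> I"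
    using split_graph_neighbour_of_I[OF S] assms by blast+
  have "adj k k'"
    using split_graph_non_neighbours_in_K[OF S K(1,2)] k k' by blast
  moreover have "{a, k, k', b} \<subseteq> V"
    using S K \<open>a \<in> I\<close> \<open>b \<in> I\<close> unfolding split_graph_def by blast
  moreover have "distinct [a, k, k', b]"
    using K \<open>a \<in> I\<close> \<open>b \<in> I\<close> k k' by auto
  moreover have "\<not> adj a b" "adj k' b" "\<not> adj k b"
    using S \<open>a \<in> I\<close> \<open>b \<in> I\<close> k k' split_graph_adj_sym[OF S]
    unfolding split_graph_def by blast+
  ultimately show ?thesis
    unfolding induced_P4_def using k k' by blast
qed

lemma Phi_adj_if_incomparable:
  assumes S: "split_graph V adj K I" and "a \<in> I" "b \<in> I" "incomparable adj a b"
  shows "Phi_adj V adj I a b"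
proof -
  obtain k k' where k: "adj a k" "\<not> adj b k" and k': "adj b k'" "\<not> adj a k'"
    using \<open>incomparable adj a b\<close> unfolding incomparable_def by blast
  have "finite V"
    using S unfolding split_graph_def simple_graph_def by blast
  then have "sigma V adj a b \<ge> 1"
    by (rule sigma_pos_if_induced_P4) (use induced_P4_of_incomparable[OF S \<open>a \<in> I\<close> \<open>b \<in> I\<close> k k'] in auto)
  moreover have "a \<noteq> b"
    using k by blast
  ultimately show ?thesis
    unfolding Phi_adj_def using \<open>a \<in> I\<close> \<open>b \<in> I\<close> by blast
qed

lemma Phi_edge_if_incomparable:
  assumes "split_graph V adj K I" "a \<in> I" "b \<in> I" "incomparable adj a b"
  shows "(a, b) \<in> edges I (Phi_adj V adj I)" "(b, a) \<in> edges I (Phi_adj V adj I)"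
  using Phi_adj_if_incomparable[OF assms] Phi_adj_sym[OF Phi_adj_if_incomparable[OF assms]] assms(2,3)
  unfolding edges_def by simp_all

lemma Phi_reach_if_common_private_neighbour:
  assumes S: "split_graph V adj K I" and I: "a \<in> I" "b \<in> I" "c \<in> I" "d \<in> I"
    and ab: "incomparable adj a b" and cd: "incomparable adj c d"
    and x: "adj a x" "\<not> adj b x" "adj c x" "\<not> adj d x"
  shows "(a, c) \<in> (edges I (Phi_adj V adj I))\<^sup>*"
proof (cases "incomparable adj a d")
  case True
  then have "(a, d) \<in> edges I (Phi_adj V adj I)" "(d, c) \<in> edges I (Phi_adj V adj I)"
    using Phi_edge_if_incomparable[OF S] I cd by blast+
  then show ?thesis
    by (rule rtrancl_trans[OF r_into_rtrancl r_into_rtrancl])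
next
  case ad: False
  show ?thesis
  proof (cases "incomparable adj b c")
    case True
    then have "(a, b) \<in> edges I (Phi_adj V adj I)" "(b, c) \<in> edges I (Phi_adj V adj I)"
      using Phi_edge_if_incomparable[OF S] I ab by blast+
    then show ?thesis
      by (rule rtrancl_trans[OF r_into_rtrancl r_into_rtrancl])
  next
    case bc: False
    \<comment> \<open>\<open>x\<close> rules out \<open>N(a) \<subseteq> N(d)\<close> and \<open>N(c) \<subseteq> N(b)\<close>, so \<open>N(d) \<subseteq> N(a)\<close> and \<open>N(b) \<subseteq> N(c)\<close>.\<close>
    have "\<forall>k. adj d k \<longrightarrow> adj a k" "\<forall>k. adj b k \<longrightarrow> adj c k"
      using ad bc x unfolding incomparable_def by blast+
    then have "incomparable adj a c"
      using ab cd unfolding incomparable_def by blast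
    then show ?thesis
      using Phi_edge_if_incomparable[OF S] I by blast
  qed
qed

lemma Phi_reach_if_spans_meet:
  assumes S: "split_graph V adj K I" and I: "a \<in> I" "b \<in> I" "c \<in> I" "d \<in> I"
    and ab: "incomparable adj a b" and cd: "incomparable adj c d"
    and x: "x \<in> span adj a b" "x \<in> span adj c d"
  shows "(a, c) \<in> (edges I (Phi_adj V adj I))\<^sup>*"
proof -
  let ?reach = "(edges I (Phi_adj V adj I))\<^sup>*"
  have "\<exists>e\<in>{a, b}. \<exists>f\<in>{c, d}. (e, f) \<in> ?reach"
  proof (cases "x \<in> {a, b} \<union> {c, d}")
    case True
    then have "x \<in> {a, b} \<inter> {c, d}"
      using I_vertex_in_span_is_endpoint[OF S] I x by blast
    then show ?thesis
      by blast
  next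
    case False
    then have "adj a x \<noteq> adj b x" "adj c x \<noteq> adj d x"
      using x unfolding span_def by blast+
    then obtain e e' f f' where ab': "(e, e') \<in> {(a, b), (b, a)}" "adj e x" "\<not> adj e' x"
      and cd': "(f, f') \<in> {(c, d), (d, c)}" "adj f x" "\<not> adj f' x"
      by (cases "adj a x"; cases "adj c x") blast+
    then have "e \<in> I" "e' \<in> I" "f \<in> I" "f' \<in> I"
      and "incomparable adj e e'" "incomparable adj f f'"
      using I ab cd unfolding incomparable_def by auto
    then have "(e, f) \<in> ?reach"
      using Phi_reach_if_common_private_neighbour[OF S] ab'(2,3) cd'(2,3) by blast
    then show ?thesis
      using ab'(1) cd'(1) by blast
  qed
  then obtain e f where "e \<in> {a, b}" "f \<in> {c, d}" "(e, f) \<in> ?reach"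
    by blast
  moreover have "(a, e) \<in> ?reach" "(f, c) \<in> ?reach"
    using Phi_edge_if_incomparable[OF S] I ab cd \<open>e \<in> {a, b}\<close> \<open>f \<in> {c, d}\<close> by blast+
  ultimately show ?thesis
    by (meson rtrancl_trans)
qed

lemma two_switch_split_graph:
  assumes S: "split_graph V adj K I" and t: "two_switch V adj a b c d"
  shows "\<exists>e\<^sub>1\<in>I. \<exists>e\<^sub>2\<in>I. incomparable adj e\<^sub>1 e\<^sub>2 \<and> {a, b, c, d} \<subseteq> span adj e\<^sub>1 e\<^sub>2"
proof -
  have t': "distinct [a, b, c, d]" "adj a b" "adj c d" "\<not> adj a c" "\<not> adj b d"
    and KI: "a \<in> K \<union> I" "b \<in> K \<union> I" "c \<in> K \<union> I" "d \<in> K \<union> I"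
    using t S unfolding two_switch_def split_graph_def by auto
  note sym = split_graph_adj_sym[OF S] and nbr = split_graph_neighbour_of_I[OF S]
    and clique = split_graph_non_neighbours_in_K[OF S]
  \<comment> \<open>Each non-edge \<open>ac\<close>, \<open>bd\<close> has an endpoint in \<open>I\<close>, whose partner along \<open>ab\<close> or \<open>cd\<close> lies in \<open>K\<close>.\<close>
  show ?thesis
  proof (cases "a \<in> K")
    case True
    have "c \<in> I"
      using clique[OF True] KI(3) t'(1,4) by auto
    then have "d \<in> K"
      using nbr t'(3) by blast
    then have "b \<in> I"
      using clique KI(2) t'(1,5) by auto
    have "incomparable adj b c"
      using t' sym unfolding incomparable_def by blast
    moreover have "{a, b, c, d} \<subseteq> span adj b c"
      using t' sym nbr \<open>b \<in> I\<close> \<open>c \<in> I\<close> unfolding span_def by blast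
    ultimately show ?thesis
      using \<open>b \<in> I\<close> \<open>c \<in> I\<close> by blast
  next
    case False
    then have "a \<in> I"
      using KI(1) by blast
    then have "b \<in> K"
      using nbr t'(2) by blast
    then have "d \<in> I"
      using clique KI(4) t'(1,5) by auto
    then have "c \<in> K"
      using nbr t'(3) sym by blast
    have "incomparable adj a d"
      using t' sym unfolding incomparable_def by blast
    moreover have "{a, b, c, d} \<subseteq> span adj a d"
      using t' sym nbr \<open>a \<in> I\<close> \<open>d \<in> I\<close> unfolding span_def by blast
    ultimately show ?thesis
      using \<open>a \<in> I\<close> \<open>d \<in> I\<close> by blast
  qed
qed

lemma A4_adj_in_span:
  assumes "split_graph V adj K I" "A4_adj V adj x y"
  shows "\<exists>e\<^sub>1\<in>I. \<exists>e\<^sub>2\<in>I. incomparable adj e\<^sub>1 e\<^sub>2 \<and> x \<in> span adj e\<^sub>1 e\<^sub>2 \<and> y \<in> span adj e\<^sub>1 e\<^sub>2"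
proof -
  obtain a b c d where "two_switch V adj a b c d" "x \<in> {a, b, c, d}" "y \<in> {a, b, c, d}"
    using \<open>A4_adj V adj x y\<close> unfolding A4_adj_def by blast
  with two_switch_split_graph[OF \<open>split_graph V adj K I\<close>] show ?thesis
    by (meson subsetD)
qed

lemma Phi_reach_along_A4_path:
  assumes S: "split_graph V adj K I" and "u \<in> I"
    and path: "(u, y) \<in> (edges V (A4_adj V adj))\<^sup>*"
    and "a \<in> I" "b \<in> I" "incomparable adj a b" "y \<in> span adj a b"
  shows "(u, a) \<in> (edges I (Phi_adj V adj I))\<^sup>*"
  using path assms(4-)
proof (induction arbitrary: a b rule: rtrancl_induct)
  case base
  then have "u = a \<or> u = b"
    using I_vertex_in_span_is_endpoint[OF S] \<open>u \<in> I\<close> by blast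
  then show ?case
    using Phi_edge_if_incomparable[OF S] base by blast
next
  case (step x y)
  obtain e\<^sub>1 e\<^sub>2 where e: "e\<^sub>1 \<in> I" "e\<^sub>2 \<in> I" "incomparable adj e\<^sub>1 e\<^sub>2"
    and "x \<in> span adj e\<^sub>1 e\<^sub>2" "y \<in> span adj e\<^sub>1 e\<^sub>2"
    using A4_adj_in_span[OF S] step.hyps(2) unfolding edges_def by blast
  then have "(u, e\<^sub>1) \<in> (edges I (Phi_adj V adj I))\<^sup>*"
    using step.IH by blast
  also have "(e\<^sub>1, a) \<in> (edges I (Phi_adj V adj I))\<^sup>*"
    using Phi_reach_if_spans_meet[OF S] e step.prems \<open>y \<in> span adj e\<^sub>1 e\<^sub>2\<close> by blast
  finally show ?case .
qed

theorem theorem2p4: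
  fixes V K I :: "'a set" and adj :: "'a \<Rightarrow> 'a \<Rightarrow> bool"
  assumes "split_graph V adj K I"
    and "connected_graph V (A4_adj V adj)"
  shows "connected_graph I (Phi_adj V adj I)"
  unfolding connected_graph_iff_edges
proof (intro ballI)
  fix u v assume "u \<in> I" "v \<in> I"
  note S = \<open>split_graph V adj K I\<close>
  have path: "(u, v) \<in> (edges V (A4_adj V adj))\<^sup>*"
    using assms(2) \<open>u \<in> I\<close> \<open>v \<in> I\<close> split_graph_I_subset[OF S]
    unfolding connected_graph_iff_edges by blast
  show "(u, v) \<in> (edges I (Phi_adj V adj I))\<^sup>*"
  proof (cases "u = v")
    case False
    then obtain x where "(x, v) \<in> edges V (A4_adj V adj)"
      using path by (metis rtranclE)
    then obtain e\<^sub>1 e\<^sub>2 where e: "e\<^sub>1 \<in> I" "e\<^sub>2 \<in> I" "incomparable adj e\<^sub>1 e\<^sub>2" "v \<in> span adj e\<^sub>1 e\<^sub>2"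
      using A4_adj_in_span[OF S] unfolding edges_def by blast
    then have "v = e\<^sub>1 \<or> v = e\<^sub>2"
      using I_vertex_in_span_is_endpoint[OF S] \<open>v \<in> I\<close> by blast
    then show ?thesis
      using Phi_reach_along_A4_path[OF S \<open>u \<in> I\<close> path] e
      by (metis incomparable_commute span_commute)
  qed simp
qed

end
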